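(* Let $D$ be a finite domain in $\mathbb{Z}^2$ and let $\mathcal{S}$ be a finite collection of paths in $D$ such that each path starts and ends on $\partial D$ and no two paths of $\mathcal{S}$ have an essential crossing. Then there is a path of total length at most $1.5\,|\partial D|+\sum_{P\in\mathcal{S}}|P|$ whose image is obtained from the union of the images of the paths in $\mathcal{S}$ by adding connecting segments along the perimeter of $D$.
   Context: Paths are paths in the standard Cayley graph of $\mathbb{Z}^2$ with generators $e_1,e_2$; $|P|$ is the length of $P$; $\partial D$ is the boundary of $D$, viewed as a closed curve. For a path $P_i$ write $A_i$ for its start and $B_i$ for its end. Two paths $P_1,P_2$ with endpoints on $\partial D$ have an essential crossing if $A_2$ and $B_2$ lie in the two different open arcs of $\partial D$ between $A_1$ and $B_1$. *)

theory Defs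
  imports "HOL-Analysis.Analysis"
begin

type_synonym pt = "int \<times> int"

definition adj :: "pt \<Rightarrow> pt \<Rightarrow> bool" where
  "adj u v \<longleftrightarrow> \<bar>fst u - fst v\<bar> + \<bar>snd u - snd v\<bar> = 1"

definition lpath :: "pt list \<Rightarrow> bool" where
  "lpath xs \<longleftrightarrow> xs \<noteq> [] \<and> (\<forall>i. Suc i < length xs \<longrightarrow> adj (xs ! i) (xs ! Suc i))"

definition plen :: "pt list \<Rightarrow> nat" where
  "plen xs = length xs - 1"

text \<open>Boundary of a domain: a simple closed lattice curve, given as a closed vertex list.\<close>
definition lcycle :: "pt list \<Rightarrow> bool" where
  "lcycle c \<longleftrightarrow> lpath c \<and> length c \<ge> 5 \<and> hd c = last c \<and> distinct (butlast c)"

definition toR :: "pt \<Rightarrow> real \<times> real" where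
  "toR p = (of_int (fst p), of_int (snd p))"

definition pimage :: "pt list \<Rightarrow> (real \<times> real) set" where
  "pimage xs = toR ` set xs \<union>
     \<Union>{closed_segment (toR (xs ! i)) (toR (xs ! Suc i)) | i. Suc i < length xs}"

definition region :: "pt list \<Rightarrow> (real \<times> real) set" where
  "region c = pimage c \<union> inside (pimage c)"

definition bidx :: "pt list \<Rightarrow> pt \<Rightarrow> nat" where
  "bidx c v = (THE i. i < length c - 1 \<and> c ! i = v)"

text \<open>k lies in the open cyclic arc from position i to position j.\<close>
definition cyc_between :: "nat \<Rightarrow> nat \<Rightarrow> nat \<Rightarrow> bool" where
  "cyc_between i j k \<longleftrightarrow> (i < j \<and> i < k \<and> k < j) \<or> (j < i \<and> (i < k \<or> k < j))"

text \<open>Essential crossing: A2 and B2 lie in the two different open arcs between A1 and B1.\<close>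
definition ess_cross :: "pt list \<Rightarrow> pt list \<Rightarrow> pt list \<Rightarrow> bool" where
  "ess_cross c P1 P2 \<longleftrightarrow>
     hd P2 \<notin> {hd P1, last P1} \<and> last P2 \<notin> {hd P1, last P1} \<and>
     (cyc_between (bidx c (hd P1)) (bidx c (last P1)) (bidx c (hd P2)) \<noteq>
      cyc_between (bidx c (hd P1)) (bidx c (last P1)) (bidx c (last P2)))"

end

theory Submission
  imports Defs
begin

(* Walk once around the boundary and let this closed walk absorb the paths. If every vertex is
   an endpoint of an even number of the paths (counted with multiplicity) and all endpoints lie on
   the walk, the paths can be absorbed one at a time: a closed path is spliced into the walk at its
   endpoint, and otherwise its last vertex is an endpoint of another path, with which it is merged.
   The result is a single path of length |dD| + sum |P|.
   The parity condition is enforced by adding boundary edges: if x_i is the parity of the number of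
   endpoints among the first i+1 boundary vertices, then both the edges i -> i+1 with x_i odd and
   those with x_i even repair all parities, and one of these two sets has at most |dD|/2 edges. *)

definition path_edges :: "pt list \<Rightarrow> (pt \<times> pt) list" where
  "path_edges xs = zip xs (tl xs)"

lemma set_path_edges: "set (path_edges xs) = {(xs ! i, xs ! Suc i) | i. Suc i < length xs}"
  unfolding path_edges_def set_zip by (auto simp: nth_tl)

lemma lpath_iff_path_edges: "lpath xs \<longleftrightarrow> xs \<noteq> [] \<and> (\<forall>(u, v)\<in>set (path_edges xs). adj u v)"
  unfolding lpath_def set_path_edges by blast

lemma pimage_eq_path_edges:
  "pimage xs = toR ` set xs \<union> (\<Union>(u, v)\<in>set (path_edges xs). closed_segment (toR u) (toR v))"
  unfolding pimage_def set_path_edges by auto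

lemma path_edges_Nil [simp]: "path_edges [] = []"
  by (simp add: path_edges_def)

lemma path_edges_Cons: "path_edges (a # xs) = (if xs = [] then [] else (a, hd xs) # path_edges xs)"
  by (cases xs) (auto simp: path_edges_def)

lemma path_edges_snoc:
  "path_edges (xs @ [a]) = path_edges xs @ (if xs = [] then [] else [(last xs, a)])"
proof (induction xs)
  case (Cons b xs)
  then show ?case by (cases xs) (auto simp: path_edges_def)
qed (simp add: path_edges_def)

lemma path_edges_rev: "path_edges (rev xs) = map prod.swap (rev (path_edges xs))"
proof (induction xs)
  case (Cons a xs)
  then show ?case by (auto simp: path_edges_snoc path_edges_Cons last_rev)
qed (simp add: path_edges_def)

definition pjoin :: "pt list \<Rightarrow> pt list \<Rightarrow> pt list" where
  "pjoin xs ys = xs @ tl ys"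

lemma path_edges_pjoin:
  assumes "xs \<noteq> []" "ys \<noteq> []" "last xs = hd ys"
  shows "path_edges (pjoin xs ys) = path_edges xs @ path_edges ys"
  using assms
proof (induction xs)
  case Nil
  then show ?case by simp
next
  case (Cons a xs)
  then show ?case
    by (cases xs; cases ys) (auto simp: pjoin_def path_edges_def)
qed

lemma set_pjoin: "xs \<noteq> [] \<Longrightarrow> ys \<noteq> [] \<Longrightarrow> last xs = hd ys \<Longrightarrow> set (pjoin xs ys) = set xs \<union> set ys"
  using last_in_set[of xs] by (cases ys) (auto simp: pjoin_def)

lemma hd_pjoin: "xs \<noteq> [] \<Longrightarrow> hd (pjoin xs ys) = hd xs"
  by (simp add: pjoin_def)

lemma last_pjoin: "xs \<noteq> [] \<Longrightarrow> ys \<noteq> [] \<Longrightarrow> last xs = hd ys \<Longrightarrow> last (pjoin xs ys) = last ys"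
  by (cases ys) (auto simp: pjoin_def)

lemma lpath_pjoin: "lpath xs \<Longrightarrow> lpath ys \<Longrightarrow> last xs = hd ys \<Longrightarrow> lpath (pjoin xs ys)"
  unfolding lpath_iff_path_edges by (auto simp: path_edges_pjoin) (simp add: pjoin_def)

lemma pimage_pjoin:
  "xs \<noteq> [] \<Longrightarrow> ys \<noteq> [] \<Longrightarrow> last xs = hd ys \<Longrightarrow> pimage (pjoin xs ys) = pimage xs \<union> pimage ys"
  unfolding pimage_eq_path_edges by (auto simp: path_edges_pjoin set_pjoin)

lemma plen_pjoin: "xs \<noteq> [] \<Longrightarrow> ys \<noteq> [] \<Longrightarrow> plen (pjoin xs ys) = plen xs + plen ys"
  unfolding plen_def pjoin_def by (cases ys; cases xs) auto

lemma lpath_rev [simp]: "lpath (rev xs) = lpath xs"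
  unfolding lpath_iff_path_edges path_edges_rev adj_def by auto

lemma pimage_rev [simp]: "pimage (rev xs) = pimage xs"
  unfolding pimage_eq_path_edges path_edges_rev by (auto simp: closed_segment_commute)

lemma plen_rev [simp]: "plen (rev xs) = plen xs"
  by (simp add: plen_def)

lemma lpath_nonempty: "lpath xs \<Longrightarrow> xs \<noteq> []"
  by (simp add: lpath_def)

lemma lpath_splice_loop:
  assumes R: "lpath R" "a \<in> set R" and P: "lpath P" "hd P = a" "last P = a"
  obtains R' where "lpath R'" "set R \<subseteq> set R'" "plen R' = plen R + plen P"
    "pimage R' = pimage R \<union> pimage P"
proof -
  obtain i where i: "i < length R" "R ! i = a"
    using R(2) by (meson in_set_conv_nth)
  define X where "X = take (Suc i) R"
  define Y where "Y = drop i R"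
  have X: "lpath X" "last X = a"
    using R i by (auto simp: X_def lpath_def) (simp add: take_Suc_conv_app_nth)
  have Y: "lpath Y" "hd Y = a"
    using R i by (auto simp: Y_def lpath_def hd_drop_conv_nth)
  have "R = pjoin X Y"
    using i(1) unfolding X_def Y_def pjoin_def
    by (metis Cons_nth_drop_Suc append_take_drop_id list.sel(3))
  moreover have PY: "lpath (pjoin P Y)" "hd (pjoin P Y) = a"
    using lpath_pjoin[OF P(1) Y(1)] P Y by (auto simp: hd_pjoin lpath_nonempty)
  ultimately show thesis
    using X Y P lpath_pjoin[OF X(1) PY(1)]
    by (intro that[of "pjoin X (pjoin P Y)"])
       (auto simp: lpath_nonempty set_pjoin pimage_pjoin plen_pjoin)
qed

definition ends :: "pt list list \<Rightarrow> pt multiset" where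
  "ends Ps = (\<Sum>P\<leftarrow>Ps. {#hd P, last P#})"

lemma ends_simps [simp]:
  "ends [] = {#}"
  "ends (P # Ps) = {#hd P, last P#} + ends Ps"
  "ends (Ps @ Qs) = ends Ps + ends Qs"
  by (simp_all add: ends_def)

lemma size_ends: "size (ends Ps) = 2 * length Ps"
  by (induction Ps) auto

lemma in_ends_iff: "v \<in># ends Ps \<longleftrightarrow> (\<exists>P\<in>set Ps. v = hd P \<or> v = last P)"
  by (induction Ps) auto

lemma merge_paths_at:
  assumes "lpath P1" "lpath P2" "last P1 = b" "b \<in> {hd P2, last P2}"
  obtains M where "lpath M" "plen M = plen P1 + plen P2" "pimage M = pimage P1 \<union> pimage P2"
    "{#hd M, last M#} + {#b, b#} = {#hd P1, last P1#} + {#hd P2, last P2#}"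
proof -
  define P2' where "P2' = (if hd P2 = b then P2 else rev P2)"
  have P2': "lpath P2'" "hd P2' = b" "{#hd P2', last P2'#} = {#hd P2, last P2#}"
    using assms by (auto simp: P2'_def hd_rev last_rev)
  have ne: "P1 \<noteq> []" "P2' \<noteq> []"
    using assms(1) P2'(1) by (auto simp: lpath_nonempty)
  show thesis
  proof
    show "lpath (pjoin P1 P2')"
      using assms P2' by (simp add: lpath_pjoin)
    show "plen (pjoin P1 P2') = plen P1 + plen P2"
      using ne by (simp add: plen_pjoin P2'_def)
    show "pimage (pjoin P1 P2') = pimage P1 \<union> pimage P2"
      using ne assms P2' by (simp add: pimage_pjoin P2'_def)
    show "{#hd (pjoin P1 P2'), last (pjoin P1 P2')#} + {#b, b#} = {#hd P1, last P1#} + {#hd P2, last P2#}"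
      using ne assms P2' by (simp add: hd_pjoin last_pjoin add_mset_commute)
  qed
qed

lemma merge_open_path:
  assumes "\<forall>P\<in>set (P1 # rest). lpath P" "\<forall>v. even (count (ends (P1 # rest)) v)" "hd P1 \<noteq> last P1"
  obtains Ps' where "length Ps' = length rest" "\<forall>P\<in>set Ps'. lpath P"
    "ends (P1 # rest) = ends Ps' + {#last P1, last P1#}"
    "(\<Sum>P\<leftarrow>Ps'. plen P) = (\<Sum>P\<leftarrow>P1 # rest. plen P)"
    "(\<Union>P\<in>set Ps'. pimage P) = (\<Union>P\<in>set (P1 # rest). pimage P)"
proof -
  define b where "b = last P1"
  have "count (ends (P1 # rest)) b = Suc (count (ends rest) b)"
    using assms(3) by (simp add: b_def)
  then have "odd (count (ends rest) b)"
    using spec[OF assms(2), of b] by simp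
  then have "b \<in># ends rest"
    by (metis count_greater_zero_iff odd_pos)
  then obtain P2 where P2: "P2 \<in> set rest" "b \<in> {hd P2, last P2}"
    unfolding in_ends_iff by blast
  then obtain xs ys where rest: "rest = xs @ P2 # ys"
    by (meson split_list)
  obtain M where M: "lpath M" "plen M = plen P1 + plen P2" "pimage M = pimage P1 \<union> pimage P2"
    and ends_M: "{#hd M, last M#} + {#b, b#} = {#hd P1, last P1#} + {#hd P2, last P2#}"
    using merge_paths_at[of P1 P2 b] assms(1) P2 b_def by auto
  show thesis
  proof (rule that[of "M # xs @ ys"])
    show "ends (P1 # rest) = ends (M # xs @ ys) + {#last P1, last P1#}"
      using ends_M by (simp add: rest b_def)
  qed (use assms(1) M rest in auto)
qed

lemma absorb_paths_even_ends:
  assumes "lpath R" "\<forall>P\<in>set Ps. lpath P" "set_mset (ends Ps) \<subseteq> set R"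
    and "\<forall>v. even (count (ends Ps) v)"
  shows "\<exists>Q. lpath Q \<and> set R \<subseteq> set Q \<and> plen Q = plen R + (\<Sum>P\<leftarrow>Ps. plen P) \<and>
             pimage Q = pimage R \<union> (\<Union>P\<in>set Ps. pimage P)"
  using assms
proof (induction "length Ps" arbitrary: Ps R rule: less_induct)
  case less
  show ?case
  proof (cases Ps)
    case Nil
    then show ?thesis using less.prems by auto
  next
    case (Cons P1 rest)
    have P1: "lpath P1" "hd P1 \<in> set R"
      using less.prems Cons by auto
    show ?thesis
    proof (cases "hd P1 = last P1")
      case True
      obtain R' where R': "lpath R'" "set R \<subseteq> set R'" "plen R' = plen R + plen P1"
        "pimage R' = pimage R \<union> pimage P1"
        using lpath_splice_loop[OF less.prems(1) P1(2) P1(1) refl True[symmetric]] by blast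
      have "\<forall>v. even (count (ends rest) v)"
      proof
        fix v
        have "count (ends Ps) v = count (ends rest) v + 2 * of_bool (v = hd P1)"
          using True Cons by simp
        then show "even (count (ends rest) v)"
          using spec[OF less.prems(4), of v] by simp
      qed
      moreover have "\<forall>P\<in>set rest. lpath P" "set_mset (ends rest) \<subseteq> set R'"
        using less.prems(2,3) R'(2) Cons by auto
      moreover have "length rest < length Ps"
        using Cons by simp
      ultimately obtain Q where "lpath Q" "set R' \<subseteq> set Q" "plen Q = plen R' + (\<Sum>P\<leftarrow>rest. plen P)"
        "pimage Q = pimage R' \<union> (\<Union>P\<in>set rest. pimage P)"
        using less.hyps[of rest R'] R'(1) by blast
      then show ?thesis
        using R' Cons by (intro exI[of _ Q]) auto
    next
      case False
      obtain Ps' where Ps': "length Ps' = length rest" "\<forall>P\<in>set Ps'. lpath P"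
        "ends Ps = ends Ps' + {#last P1, last P1#}"
        "(\<Sum>P\<leftarrow>Ps'. plen P) = (\<Sum>P\<leftarrow>Ps. plen P)"
        "(\<Union>P\<in>set Ps'. pimage P) = (\<Union>P\<in>set Ps. pimage P)"
        using merge_open_path[of P1 rest] less.prems(2,4) Cons False by blast
      have "set_mset (ends Ps') \<subseteq> set R"
        using less.prems(3) Ps'(3) by auto
      moreover have "\<forall>v. even (count (ends Ps') v)"
      proof
        fix v
        have "even (count (ends Ps') v + count {#last P1, last P1#} v)"
          using less.prems(4) Ps'(3) by (metis count_union)
        then show "even (count (ends Ps') v)"
          by auto
      qed
      moreover have "length Ps' < length Ps"
        using Cons Ps'(1) by simp
      ultimately show ?thesis
        using less.hyps[of Ps' R] less.prems(1) Ps'(2,4,5) by metis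
    qed
  qed
qed

lemma cyclic_parity_correction:
  fixes f :: "nat \<Rightarrow> nat"
  assumes "0 < L" "even (\<Sum>k<L. f k)"
  obtains S where "S \<subseteq> {..<L}" "2 * card S \<le> L"
    "\<And>j. j < L \<Longrightarrow> even (f j + of_bool (j \<in> S) + of_bool ((if j = 0 then L - 1 else j - 1) \<in> S))"
proof -
  define pred where "pred j = (if j = 0 then L - 1 else j - 1)" for j
  define x where "x i \<longleftrightarrow> odd (\<Sum>k\<le>i. f k)" for i
  have "\<not> x (L - 1)"
    using assms by (simp add: x_def lessThan_Suc_atMost[symmetric])
  then have x_pred: "x j \<longleftrightarrow> x (pred j) \<noteq> odd (f j)" if "j < L" for j
    by (cases j) (simp_all add: x_def pred_def)
  define A where "A = {i. i < L \<and> x i}"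
  have parity: "even (f j + of_bool (j \<in> T) + of_bool (pred j \<in> T))"
    if "T = A \<or> T = {..<L} - A" "j < L" for T j
    using that x_pred[of j] assms(1) by (auto simp: A_def pred_def)
  show thesis
  proof (cases "2 * card A \<le> L")
    case True
    then show thesis
      using parity[of A, unfolded pred_def] by (intro that[of A]) (auto simp: A_def)
  next
    case False
    have "A \<subseteq> {..<L}"
      by (auto simp: A_def)
    then have "card ({..<L} - A) = L - card A"
      by (simp add: card_Diff_subset finite_subset)
    then show thesis
      using parity[of "{..<L} - A", unfolded pred_def] False by (intro that[of "{..<L} - A"]) auto
  qed
qed

lemma lcycle_nth_eq_iff:
  assumes "lcycle c" "i < plen c" "j < plen c"
  shows "c ! i = c ! j \<longleftrightarrow> i = j"
proof -
  have "distinct (butlast c)" "length (butlast c) = plen c"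
    using assms(1) by (simp_all add: lcycle_def plen_def)
  then show ?thesis
    using assms(2,3) nth_eq_iff_index_eq by (fastforce simp: nth_butlast)
qed

lemma lcycle_nth_plen: "lcycle c \<Longrightarrow> c ! plen c = c ! 0"
  unfolding lcycle_def plen_def by (metis hd_conv_nth last_conv_nth list.size(3) not_numeral_le_zero)

lemma lcycle_set: "lcycle c \<Longrightarrow> set c = (\<lambda>i. c ! i) ` {..<plen c}"
proof -
  assume c: "lcycle c"
  then have "plen c \<ge> 4" "length c = Suc (plen c)"
    by (auto simp: lcycle_def plen_def)
  then show ?thesis
    using lcycle_nth_plen[OF c] by (auto simp: set_conv_nth less_Suc_eq)
qed

lemma lcycle_nth_Suc_eq_iff:
  assumes "lcycle c" "i < plen c" "j < plen c"
  shows "c ! Suc i = c ! j \<longleftrightarrow> i = (if j = 0 then plen c - 1 else j - 1)"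
proof (cases "Suc i < plen c")
  case True
  then show ?thesis
    using lcycle_nth_eq_iff[OF assms(1) True assms(3)] assms(3) by auto
next
  case False
  then have "Suc i = plen c"
    using assms(2) by simp
  then show ?thesis
    using lcycle_nth_plen[OF assms(1)] lcycle_nth_eq_iff[OF assms(1) _ assms(3), of 0] assms(2,3) by auto
qed

lemma lpath_lcycle_edge:
  assumes "lcycle c" "i < plen c"
  shows "lpath [c ! i, c ! Suc i]" "plen [c ! i, c ! Suc i] = 1" "pimage [c ! i, c ! Suc i] \<subseteq> pimage c"
proof -
  have i: "Suc i < length c"
    using assms(2) by (simp add: plen_def)
  then show "lpath [c ! i, c ! Suc i]"
    using assms(1) by (simp add: lcycle_def lpath_def less_Suc_eq)
  show "plen [c ! i, c ! Suc i] = 1"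
    by (simp add: plen_def)
  show "pimage [c ! i, c ! Suc i] \<subseteq> pimage c"
    using i by (auto simp: pimage_def less_Suc_eq)
qed

lemma sum_count_eq_size: "finite A \<Longrightarrow> set_mset M \<subseteq> A \<Longrightarrow> (\<Sum>v\<in>A. count M v) = size M"
  unfolding size_multiset_overloaded_eq by (intro sum.mono_neutral_right) (auto simp: not_in_iff)

lemma lcycle_sum_count_eq_size:
  assumes c: "lcycle c" and "set_mset M \<subseteq> set c"
  shows "(\<Sum>k<plen c. count M (c ! k)) = size M"
proof -
  have "inj_on (\<lambda>i. c ! i) {..<plen c}"
    using lcycle_nth_eq_iff[OF c] by (auto simp: inj_on_def)
  then have "(\<Sum>k<plen c. count M (c ! k)) = (\<Sum>v\<in>set c. count M v)"
    using sum.reindex[of "\<lambda>i. c ! i" "{..<plen c}" "count M"] lcycle_set[OF c] by simp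
  also have "\<dots> = size M"
    using assms(2) by (simp add: sum_count_eq_size)
  finally show ?thesis .
qed

lemma count_lcycle_edges:
  assumes c: "lcycle c" and "S \<subseteq> {..<plen c}" "j < plen c"
  shows "count (\<Sum>i\<in>S. {#c ! i, c ! Suc i#}) (c ! j) =
    of_bool (j \<in> S) + of_bool ((if j = 0 then plen c - 1 else j - 1) \<in> S)"
proof -
  define j' where "j' = (if j = 0 then plen c - 1 else j - 1)"
  have "count {#c ! i, c ! Suc i#} (c ! j) = (if i = j then 1 else 0) + (if i = j' then 1 else 0)"
    if "i \<in> S" for i
  proof -
    have "c ! i = c ! j \<longleftrightarrow> i = j" "c ! Suc i = c ! j \<longleftrightarrow> i = j'"
      using that assms lcycle_nth_eq_iff[OF c, of i j] lcycle_nth_Suc_eq_iff[OF c, of i j]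
      by (auto simp: j'_def)
    then show ?thesis
      by (cases "i = j"; cases "i = j'") auto
  qed
  then have "count (\<Sum>i\<in>S. {#c ! i, c ! Suc i#}) (c ! j) =
      (\<Sum>i\<in>S. (if i = j then 1 else 0) + (if i = j' then 1 else 0))"
    unfolding count_sum by (rule sum.cong[OF refl])
  also have "\<dots> = of_bool (j \<in> S) + of_bool (j' \<in> S)"
    using finite_subset[OF assms(2)] by (simp add: sum.distrib)
  finally show ?thesis
    by (simp add: j'_def)
qed

lemma boundary_parity_correction:
  assumes c: "lcycle c" and M: "set_mset M \<subseteq> set c" "even (size M)"
  obtains E where "\<forall>P\<in>set E. lpath P \<and> plen P = 1 \<and> pimage P \<subseteq> pimage c"
    "set_mset (ends E) \<subseteq> set c" "2 * length E \<le> plen c" "\<forall>v. even (count (M + ends E) v)"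
proof -
  have "0 < plen c"
    using c by (auto simp: lcycle_def plen_def)
  then obtain S where S: "S \<subseteq> {..<plen c}" "2 * card S \<le> plen c" and S_parity:
    "\<And>j. j < plen c \<Longrightarrow>
      even (count M (c ! j) + of_bool (j \<in> S) + of_bool ((if j = 0 then plen c - 1 else j - 1) \<in> S))"
    using cyclic_parity_correction[of "plen c" "\<lambda>k. count M (c ! k)"] M
    by (auto simp: lcycle_sum_count_eq_size[OF c])
  have "finite S"
    using S(1) finite_subset by blast
  define E where "E = map (\<lambda>i. [c ! i, c ! Suc i]) (sorted_list_of_set S)"
  have edges: "\<forall>P\<in>set E. lpath P \<and> plen P = 1 \<and> pimage P \<subseteq> pimage c"
    using lpath_lcycle_edge[OF c] S(1) \<open>finite S\<close> by (auto simp: E_def)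
  have ends_E: "ends E = (\<Sum>i\<in>S. {#c ! i, c ! Suc i#})"
    using \<open>finite S\<close> by (simp add: E_def ends_def o_def sum_list_distinct_conv_sum_set)
  have "c ! i \<in> set c" "c ! Suc i \<in> set c" if "i \<in> S" for i
    using that S(1) by (auto simp: plen_def)
  then have "set_mset (ends E) \<subseteq> set c"
    using \<open>finite S\<close> by (auto simp: in_ends_iff E_def)
  moreover have "even (count (M + ends E) v)" for v
  proof (cases "v \<in> set c")
    case False
    then have "v \<notin># M" "v \<notin># ends E"
      using M(1) \<open>set_mset (ends E) \<subseteq> set c\<close> by blast+
    then show ?thesis
      by (simp add: not_in_iff)
  next
    case True
    then obtain j where "j < plen c" "v = c ! j"
      using lcycle_set[OF c] by blast
    then show ?thesis
      using S_parity count_lcycle_edges[OF c S(1)] by (simp add: ends_E add.assoc)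
  qed
  moreover have "2 * length E \<le> plen c"
    using S(2) \<open>finite S\<close> by (simp add: E_def)
  ultimately show thesis
    using that[OF edges] by blast
qed

theorem lemma2p6:
  fixes c :: "pt list" and Ps :: "pt list list"
  assumes "lcycle c"
    and "\<forall>P\<in>set Ps. lpath P \<and> pimage P \<subseteq> region c \<and> hd P \<in> set c \<and> last P \<in> set c"
    and "\<forall>P1\<in>set Ps. \<forall>P2\<in>set Ps. \<not> ess_cross c P1 P2"
  shows "\<exists>Q. lpath Q \<and>
    real (plen Q) \<le> 3 / 2 * real (plen c) + (\<Sum>P\<leftarrow>Ps. real (plen P)) \<and>
    (\<Union>P\<in>set Ps. pimage P) \<subseteq> pimage Q \<and>
    pimage Q \<subseteq> (\<Union>P\<in>set Ps. pimage P) \<union> pimage c"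
proof -
  have paths: "\<forall>P\<in>set Ps. lpath P" and ends_Ps: "set_mset (ends Ps) \<subseteq> set c"
    using assms(2) by (auto simp: in_ends_iff)
  obtain E where E: "\<forall>P\<in>set E. lpath P \<and> plen P = 1 \<and> pimage P \<subseteq> pimage c"
    "set_mset (ends E) \<subseteq> set c" "2 * length E \<le> plen c" "\<forall>v. even (count (ends Ps + ends E) v)"
    using boundary_parity_correction[OF assms(1) ends_Ps] by (auto simp: size_ends)
  have "lpath c"
    using assms(1) by (simp add: lcycle_def)
  moreover have "\<forall>P\<in>set (Ps @ E). lpath P" "set_mset (ends (Ps @ E)) \<subseteq> set c"
    "\<forall>v. even (count (ends (Ps @ E)) v)"
    using paths ends_Ps E(1,2,4) by auto
  ultimately obtain Q where Q: "lpath Q" "plen Q = plen c + (\<Sum>P\<leftarrow>Ps @ E. plen P)"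
    "pimage Q = pimage c \<union> (\<Union>P\<in>set (Ps @ E). pimage P)"
    using absorb_paths_even_ends by blast
  have "(\<Sum>P\<leftarrow>E. plen P) = length E"
    using E(1) by (induction E) auto
  then have "real (plen Q) = real (plen c) + (\<Sum>P\<leftarrow>Ps. real (plen P)) + real (length E)"
    using Q(2) by (simp add: sum_list_of_nat[symmetric] o_def)
  moreover have "real (length E) \<le> real (plen c) / 2"
    using E(3) by simp
  moreover have "(\<Union>P\<in>set E. pimage P) \<subseteq> pimage c"
    using E(1) by auto
  ultimately show ?thesis
    using Q(1,3) by (intro exI[of _ Q]) auto
qed

end
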